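(* Let $\varepsilon>0$, $y_0\in(-1,0]$, and set $\varepsilon_1=\varepsilon/(1+y_0)^2$, $\varepsilon_2=\varepsilon/(1-y_0)^2$, $a=(1+y_0)/(1-y_0)\in(0,1]$. Let $c_1,c_2>0$. Let $\Omega=(\omega_1,\omega_2)^T$ be a classical solution on $[0,1]\times[t_0,\infty)$ of $$\partial_t\omega_i(x,t)=\varepsilon_i\,\partial_x^2\omega_i(x,t)-c_i\,\omega_i(x,t),\quad i=1,2,$$ with $$\omega_1(0,t)=\omega_2(0,t),\qquad \partial_x\omega_1(0,t)+a\,\partial_x\omega_2(0,t)=0,\qquad \omega_1(1,t)=\omega_2(1,t)=0 .$$ Then for all $t\ge t_0$, $$\|\Omega(\cdot,t)\|_{L^2}\le \Pi\, e^{-\gamma(t-t_0)}\,\|\Omega(\cdot,t_0)\|_{L^2},\qquad \Pi=a^{-3/2},\quad \gamma=\min\{a^3c_1,\,c_2\}+\frac{\varepsilon_2}{4},$$ where $\|\Omega(\cdot,t)\|_{L^2}^2=\int_0^1(\omega_1(x,t)^2+\omega_2(x,t)^2)\,dx$.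
   Context: This is the "folded target system": the boundary conditions at $x=0$ encode continuity of the unfolded state and of its spatial derivative at the folding point $y_0$. *)

theory Defs
  imports "HOL-Analysis.Analysis"
begin

definition classical_heat_sol ::
  "real \<Rightarrow> real \<Rightarrow> real \<Rightarrow> (real \<Rightarrow> real \<Rightarrow> real) \<Rightarrow> (real \<Rightarrow> real \<Rightarrow> real)
   \<Rightarrow> (real \<Rightarrow> real \<Rightarrow> real) \<Rightarrow> (real \<Rightarrow> real \<Rightarrow> real) \<Rightarrow> bool" where
  "classical_heat_sol eps c t0 w wx wxx wt \<longleftrightarrow>
     continuous_on ({0..1} \<times> {t0..}) (\<lambda>(x,t). w x t) \<and>
     continuous_on ({0..1} \<times> {t0..}) (\<lambda>(x,t). wx x t) \<and>
     continuous_on ({0..1} \<times> {t0..}) (\<lambda>(x,t). wxx x t) \<and>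
     continuous_on ({0..1} \<times> {t0..}) (\<lambda>(x,t). wt x t) \<and>
     (\<forall>x\<in>{0..1}. \<forall>t\<in>{t0..}.
        ((\<lambda>y. w y t) has_real_derivative wx x t) (at x within {0..1}) \<and>
        ((\<lambda>y. wx y t) has_real_derivative wxx x t) (at x within {0..1}) \<and>
        ((\<lambda>s. w x s) has_real_derivative wt x t) (at t within {t0..}) \<and>
        wt x t = eps * wxx x t - c * w x t)"

definition L2norm2 :: "(real \<Rightarrow> real \<Rightarrow> real) \<Rightarrow> (real \<Rightarrow> real \<Rightarrow> real) \<Rightarrow> real \<Rightarrow> real" where
  "L2norm2 w1 w2 t = sqrt (integral {0..1} (\<lambda>x. (w1 x t)\<^sup>2 + (w2 x t)\<^sup>2))"

end

(* The weighted energy V(t) = ||w1||^2 + ||w2||^2 / a is a Lyapunov function. Differentiating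
   under the integral and integrating by parts, V' consists of the dissipation terms
   -2 e1 ||w1_x||^2 - 2 (e2/a) ||w2_x||^2 - 2 c1 ||w1||^2 - 2 (c2/a) ||w2||^2 and of boundary terms
   at x = 0, which cancel because e2/a = e1 a, w1 = w2 and w1_x + a w2_x = 0 there. For w(1) = 0
   the Hardy-Poincare inequality ||w||^2 <= 4 ||w_x||^2 turns the dissipation into V' <= -2 gamma V,
   so V decays like exp (-2 gamma (t - t0)). As V lies between the squared norm and its multiple
   by 1/a, the norm itself decays with constant a^(-1/2) <= a^(-3/2). *)

theory Submission
  imports Defs
begin

lemma continuous_on_slice:
  assumes "continuous_on (A \<times> B) (\<lambda>(x, t). f x t)" and "t \<in> B"
  shows "continuous_on A (\<lambda>x. f x t)"
  by (rule continuous_on_compose2[OF assms(1), of _ "\<lambda>x. (x, t)", simplified])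
    (use assms(2) in \<open>auto intro: continuous_intros\<close>)

lemma has_integral_deriv_mult_deriv:
  fixes w w' w'' :: "real \<Rightarrow> real"
  assumes "a \<le> b"
    and "\<And>x. x \<in> {a..b} \<Longrightarrow> (w has_real_derivative w' x) (at x within {a..b})"
    and "\<And>x. x \<in> {a..b} \<Longrightarrow> (w' has_real_derivative w'' x) (at x within {a..b})"
  shows "((\<lambda>x. (w' x)\<^sup>2 + w x * w'' x) has_integral w b * w' b - w a * w' a) {a..b}"
proof (rule fundamental_theorem_of_calculus[OF assms(1)])
  fix x assume x: "x \<in> {a..b}"
  have "((\<lambda>x. w x * w' x) has_real_derivative w' x * w' x + w x * w'' x) (at x within {a..b})"
    by (rule DERIV_cong[OF DERIV_mult[OF assms(2,3)[OF x]]]) (simp add: algebra_simps)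
  then show "((\<lambda>x. w x * w' x) has_vector_derivative (w' x)\<^sup>2 + w x * w'' x) (at x within {a..b})"
    by (simp add: has_real_derivative_iff_has_vector_derivative power2_eq_square)
qed

lemma has_integral_deriv_id_mult_square:
  fixes w w' :: "real \<Rightarrow> real"
  assumes "a \<le> b"
    and "\<And>x. x \<in> {a..b} \<Longrightarrow> (w has_real_derivative w' x) (at x within {a..b})"
  shows "((\<lambda>x. (w x)\<^sup>2 + 2 * x * w x * w' x) has_integral b * (w b)\<^sup>2 - a * (w a)\<^sup>2) {a..b}"
proof (rule fundamental_theorem_of_calculus[OF assms(1)])
  fix x assume x: "x \<in> {a..b}"
  have "((\<lambda>x. x * (w x * w x)) has_real_derivative 1 * (w x * w x) + x * (w' x * w x + w x * w' x))
      (at x within {a..b})"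
    by (rule DERIV_cong[OF DERIV_mult[OF DERIV_ident DERIV_mult[OF assms(2)[OF x] assms(2)[OF x]]]])
      (simp add: algebra_simps)
  then show "((\<lambda>x. x * (w x)\<^sup>2) has_vector_derivative (w x)\<^sup>2 + 2 * x * w x * w' x) (at x within {a..b})"
    by (simp add: has_real_derivative_iff_has_vector_derivative power2_eq_square algebra_simps)
qed

lemma poincare_inequality_unit_interval:
  fixes w w' :: "real \<Rightarrow> real"
  assumes deriv: "\<And>x. x \<in> {0..1} \<Longrightarrow> (w has_real_derivative w' x) (at x within {0..1})"
    and "continuous_on {0..1} w'" and "w 1 = 0"
  shows "integral {0..1} (\<lambda>x. (w x)\<^sup>2) \<le> 4 * integral {0..1} (\<lambda>x. (w' x)\<^sup>2)"
proof -
  have "continuous_on {0..1} w"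
    using deriv by (intro DERIV_continuous_on) auto
  note cont = this \<open>continuous_on {0..1} w'\<close>
  define P where "P = integral {0..1} (\<lambda>x. (w x + 2 * x * w' x)\<^sup>2 + 4 * (1 - x\<^sup>2) * (w' x)\<^sup>2)"
  have P: "((\<lambda>x. (w x + 2 * x * w' x)\<^sup>2 + 4 * (1 - x\<^sup>2) * (w' x)\<^sup>2) has_integral P) {0..1}"
    unfolding P_def using cont
    by (intro integrable_integral integrable_continuous_interval continuous_intros)
  have "0 \<le> P"
    by (rule has_integral_nonneg[OF P]) (auto intro!: add_nonneg_nonneg mult_nonneg_nonneg simp: power_le_one)
  have boundary: "((\<lambda>x. (w x)\<^sup>2 + 2 * x * w x * w' x) has_integral 0) {0..1}"
    using has_integral_deriv_id_mult_square[of 0 1 w w'] deriv \<open>w 1 = 0\<close> by simp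
  txt \<open>Complete the square in the multiplier identity for x w^2, whose derivative integrates to w(1)^2 = 0.\<close>
  have pointwise: "(w x + 2 * x * w' x)\<^sup>2 + 4 * (1 - x\<^sup>2) * (w' x)\<^sup>2 - 2 * ((w x)\<^sup>2 + 2 * x * w x * w' x)
      = 4 * (w' x)\<^sup>2 - (w x)\<^sup>2" for x
    by (simp add: algebra_simps power2_eq_square)
  have "((\<lambda>x. 4 * (w' x)\<^sup>2 - (w x)\<^sup>2) has_integral P) {0..1}"
    using has_integral_diff[OF P has_integral_mult_right[OF boundary, of 2]] by (simp only: pointwise) simp
  moreover have "((\<lambda>x. 4 * (w' x)\<^sup>2 - (w x)\<^sup>2) has_integral
      4 * integral {0..1} (\<lambda>x. (w' x)\<^sup>2) - integral {0..1} (\<lambda>x. (w x)\<^sup>2)) {0..1}"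
    using cont by (intro has_integral_diff has_integral_mult_right integrable_integral
        integrable_continuous_interval continuous_intros)
  ultimately have "P = 4 * integral {0..1} (\<lambda>x. (w' x)\<^sup>2) - integral {0..1} (\<lambda>x. (w x)\<^sup>2)"
    by (rule has_integral_unique)
  with \<open>0 \<le> P\<close> show ?thesis
    by simp
qed

lemma heat_dissipation_bound:
  fixes w w' w'' :: "real \<Rightarrow> real"
  assumes "0 \<le> eps"
    and deriv: "\<And>x. x \<in> {0..1} \<Longrightarrow> (w has_real_derivative w' x) (at x within {0..1})"
    and deriv': "\<And>x. x \<in> {0..1} \<Longrightarrow> (w' has_real_derivative w'' x) (at x within {0..1})"
    and "continuous_on {0..1} w''" and "w 1 = 0"
  shows "integral {0..1} (\<lambda>x. 2 * w x * (eps * w'' x - c * w x))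
    \<le> - 2 * eps * w 0 * w' 0 - 2 * (c + eps / 4) * integral {0..1} (\<lambda>x. (w x)\<^sup>2)"
proof -
  have "continuous_on {0..1} w" "continuous_on {0..1} w'"
    using deriv deriv' by (intro DERIV_continuous_on; auto)+
  note cont = this \<open>continuous_on {0..1} w''\<close>
  define I where "I = integral {0..1} (\<lambda>x. (w x)\<^sup>2)"
  define J where "J = integral {0..1} (\<lambda>x. (w' x)\<^sup>2)"
  have "((\<lambda>x. (w' x)\<^sup>2 + w x * w'' x) has_integral - w 0 * w' 0) {0..1}"
    using has_integral_deriv_mult_deriv[of 0 1 w w' w''] deriv deriv' \<open>w 1 = 0\<close> by simp
  then have "((\<lambda>x. ((w' x)\<^sup>2 + w x * w'' x) - (w' x)\<^sup>2) has_integral - w 0 * w' 0 - J) {0..1}"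
    unfolding J_def using cont
    by (intro has_integral_diff integrable_integral integrable_continuous_interval continuous_intros)
  then have "((\<lambda>x. 2 * eps * (w x * w'' x) - 2 * c * (w x)\<^sup>2) has_integral
      2 * eps * (- w 0 * w' 0 - J) - 2 * c * I) {0..1}"
    unfolding I_def using cont
    by (intro has_integral_diff has_integral_mult_right integrable_integral
        integrable_continuous_interval continuous_intros) simp_all
  then have "integral {0..1} (\<lambda>x. 2 * w x * (eps * w'' x - c * w x)) = 2 * eps * (- w 0 * w' 0 - J) - 2 * c * I"
    by (simp add: integral_unique algebra_simps power2_eq_square)
  moreover have "eps * I \<le> eps * (4 * J)"
    unfolding I_def J_def
    using poincare_inequality_unit_interval[OF deriv] cont \<open>w 1 = 0\<close> \<open>0 \<le> eps\<close>
    by (intro mult_left_mono) auto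
  ultimately show ?thesis
    unfolding I_def[symmetric] by (simp add: algebra_simps)
qed

lemma classical_heat_sol_continuous_on_slices:
  assumes "classical_heat_sol eps c t0 w wx wxx wt" and "t0 \<le> t"
  shows "continuous_on {0..1} (\<lambda>x. w x t)" and "continuous_on {0..1} (\<lambda>x. wxx x t)"
  using assms continuous_on_slice[of "{0..1}" "{t0..}" w t] continuous_on_slice[of "{0..1}" "{t0..}" wxx t]
  by (auto simp: classical_heat_sol_def)

definition energy :: "(real \<Rightarrow> real \<Rightarrow> real) \<Rightarrow> real \<Rightarrow> real" where
  "energy w t = integral {0..1} (\<lambda>x. (w x t)\<^sup>2)"

lemma energy_nonneg: "0 \<le> energy w t"
  unfolding energy_def
  by (cases "(\<lambda>x. (w x t)\<^sup>2) integrable_on {0..1}") (auto simp: integral_nonneg not_integrable_integral)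

lemma energy_has_real_derivative:
  assumes sol: "classical_heat_sol eps c t0 w wx wxx wt" and "t0 \<le> t"
  shows "(energy w has_real_derivative integral {0..1} (\<lambda>x. 2 * w x t * wt x t)) (at t within {t0..})"
proof -
  note sol = sol[unfolded classical_heat_sol_def]
  have cont: "continuous_on ({t0..} \<times> {0..1}) (\<lambda>(s, x). w x s)"
    "continuous_on ({t0..} \<times> {0..1}) (\<lambda>(s, x). wt x s)"
    using sol continuous_on_swap_args by blast+
  have "((\<lambda>s. integral (cbox 0 1) (\<lambda>x. (w x s)\<^sup>2)) has_field_derivative
      integral (cbox 0 1) (\<lambda>x. 2 * w x t * wt x t)) (at t within {t0..})"
  proof (rule leibniz_rule_field_derivative)
    fix s x :: real assume "s \<in> {t0..}" "x \<in> cbox 0 1"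
    then show "((\<lambda>s. (w x s)\<^sup>2) has_field_derivative 2 * w x s * wt x s) (at s within {t0..})"
      using sol by (auto intro!: derivative_eq_intros)
  next
    fix s :: real assume "s \<in> {t0..}"
    then show "(\<lambda>x. (w x s)\<^sup>2) integrable_on cbox 0 1"
      using classical_heat_sol_continuous_on_slices(1)[OF assms(1)]
      by (auto intro!: integrable_continuous_interval continuous_on_power)
  next
    show "continuous_on ({t0..} \<times> cbox 0 1) (\<lambda>(s, x). 2 * w x s * wt x s)"
      using continuous_on_mult[OF continuous_on_mult[OF continuous_on_const cont(1)] cont(2)]
      by (simp add: case_prod_unfold)
  qed (use \<open>t0 \<le> t\<close> in auto)
  then show ?thesis
    by (simp add: energy_def[abs_def])
qed

lemma classical_heat_sol_dissipation:
  assumes sol: "classical_heat_sol eps c t0 w wx wxx wt"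
    and "0 \<le> eps" and "t0 \<le> t" and "w 1 t = 0"
  shows "integral {0..1} (\<lambda>x. 2 * w x t * wt x t) \<le> - 2 * eps * w 0 t * wx 0 t - 2 * (c + eps / 4) * energy w t"
proof -
  note sol = sol[unfolded classical_heat_sol_def]
  have "integral {0..1} (\<lambda>x. 2 * w x t * wt x t) = integral {0..1} (\<lambda>x. 2 * w x t * (eps * wxx x t - c * w x t))"
    using sol \<open>t0 \<le> t\<close> by (intro integral_cong) auto
  also have "\<dots> \<le> - 2 * eps * w 0 t * wx 0 t - 2 * (c + eps / 4) * energy w t"
    unfolding energy_def using sol \<open>t0 \<le> t\<close> \<open>0 \<le> eps\<close> \<open>w 1 t = 0\<close>
    by (intro heat_dissipation_bound classical_heat_sol_continuous_on_slices(2)[OF assms(1)]) auto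
  finally show ?thesis .
qed

lemma gronwall_exp_decay:
  fixes V V' :: "real \<Rightarrow> real"
  assumes deriv: "\<And>s. t0 \<le> s \<Longrightarrow> (V has_real_derivative V' s) (at s within {t0..})"
    and bound: "\<And>s. t0 \<le> s \<Longrightarrow> V' s + k * V s \<le> 0"
    and "t0 \<le> t"
  shows "exp (k * (t - t0)) * V t \<le> V t0"
proof -
  have "continuous_on {t0..} V"
    using deriv by (intro DERIV_continuous_on) auto
  have "(\<lambda>s. exp (k * (s - t0)) * V s) t \<le> (\<lambda>s. exp (k * (s - t0)) * V s) t0"
  proof (rule DERIV_nonpos_imp_decreasing_open[OF \<open>t0 \<le> t\<close>])
    fix s assume s: "t0 < s" "s < t"
    have "(V has_real_derivative V' s) (at s within {t0<..})"
      by (rule DERIV_subset[OF deriv]) (use s in auto)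
    then have "(V has_real_derivative V' s) (at s)"
      using at_within_open[of s "{t0<..}"] s by simp
    then have "((\<lambda>s. exp (k * (s - t0)) * V s) has_real_derivative
        exp (k * (s - t0)) * (V' s + k * V s)) (at s)"
      by (auto intro!: derivative_eq_intros simp: algebra_simps)
    moreover have "exp (k * (s - t0)) * (V' s + k * V s) \<le> 0"
      using bound[of s] s by (simp add: mult_nonneg_nonpos)
    ultimately show "\<exists>y. ((\<lambda>s. exp (k * (s - t0)) * V s) has_real_derivative y) (at s) \<and> y \<le> 0"
      by blast
  qed (use \<open>continuous_on {t0..} V\<close> in \<open>auto intro!: continuous_intros elim: continuous_on_subset\<close>)
  then show ?thesis
    by simp
qed

lemma coupled_heat_energy_decay:
  fixes w1 w1x w1xx w1t w2 w2x w2xx w2t :: "real \<Rightarrow> real \<Rightarrow> real"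
  assumes "0 < a" and "0 \<le> e1" and "e2 = e1 * a\<^sup>2"
    and "g \<le> c1 + e1 / 4" and "g \<le> c2 + e2 / 4"
    and sol1: "classical_heat_sol e1 c1 t0 w1 w1x w1xx w1t"
    and sol2: "classical_heat_sol e2 c2 t0 w2 w2x w2xx w2t"
    and continuity: "\<forall>t\<ge>t0. w1 0 t = w2 0 t"
    and flux: "\<forall>t\<ge>t0. w1x 0 t + a * w2x 0 t = 0"
    and dirichlet: "\<forall>t\<ge>t0. w1 1 t = 0 \<and> w2 1 t = 0"
    and "t0 \<le> t"
  shows "exp (2 * g * (t - t0)) * (energy w1 t + energy w2 t / a) \<le> energy w1 t0 + energy w2 t0 / a"
proof (rule gronwall_exp_decay[OF _ _ \<open>t0 \<le> t\<close>])
  define D where "D w wt s = integral {0..1} (\<lambda>x. 2 * w x s * wt x s)"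
    for w wt :: "real \<Rightarrow> real \<Rightarrow> real" and s
  fix s assume "t0 \<le> s"
  show "((\<lambda>s. energy w1 s + energy w2 s / a) has_real_derivative D w1 w1t s + D w2 w2t s / a)
      (at s within {t0..})"
    unfolding D_def
    by (intro DERIV_add DERIV_cdivide energy_has_real_derivative[OF sol1 \<open>t0 \<le> s\<close>]
        energy_has_real_derivative[OF sol2 \<open>t0 \<le> s\<close>])
  have "0 \<le> e2"
    using \<open>0 \<le> e1\<close> \<open>e2 = e1 * a\<^sup>2\<close> by simp
  have D1: "D w1 w1t s \<le> - 2 * e1 * w1 0 s * w1x 0 s - 2 * (c1 + e1 / 4) * energy w1 s"
    unfolding D_def using dirichlet \<open>t0 \<le> s\<close> \<open>0 \<le> e1\<close>
    by (intro classical_heat_sol_dissipation[OF sol1]) auto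
  have "D w2 w2t s \<le> - 2 * e2 * w2 0 s * w2x 0 s - 2 * (c2 + e2 / 4) * energy w2 s"
    unfolding D_def using dirichlet \<open>t0 \<le> s\<close> \<open>0 \<le> e2\<close>
    by (intro classical_heat_sol_dissipation[OF sol2]) auto
  then have "D w2 w2t s / a \<le> (- 2 * e2 * w2 0 s * w2x 0 s - 2 * (c2 + e2 / 4) * energy w2 s) / a"
    using \<open>0 < a\<close> by (intro divide_right_mono) auto
  also have "\<dots> = - 2 * (e2 / a) * w2 0 s * w2x 0 s - 2 * (c2 + e2 / 4) * (energy w2 s / a)"
    using \<open>0 < a\<close> by (simp add: field_simps)
  finally have D2: "D w2 w2t s / a \<le> - 2 * (e2 / a) * w2 0 s * w2x 0 s - 2 * (c2 + e2 / 4) * (energy w2 s / a)" .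
  have "g * energy w1 s \<le> (c1 + e1 / 4) * energy w1 s"
    using \<open>g \<le> c1 + e1 / 4\<close> by (intro mult_right_mono energy_nonneg)
  moreover have "g * (energy w2 s / a) \<le> (c2 + e2 / 4) * (energy w2 s / a)"
    using \<open>g \<le> c2 + e2 / 4\<close> \<open>0 < a\<close> by (intro mult_right_mono) (simp_all add: energy_nonneg)
  moreover have "e1 * w1 0 s * w1x 0 s + e2 / a * w2 0 s * w2x 0 s = 0"
  proof -
    have "e2 / a = e1 * a"
      using \<open>0 < a\<close> \<open>e2 = e1 * a\<^sup>2\<close> by (simp add: power2_eq_square)
    then have "e1 * w1 0 s * w1x 0 s + e2 / a * w2 0 s * w2x 0 s = e1 * w1 0 s * (w1x 0 s + a * w2x 0 s)"
      using continuity \<open>t0 \<le> s\<close> by (simp add: algebra_simps)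
    then show ?thesis
      using flux \<open>t0 \<le> s\<close> by simp
  qed
  ultimately show "D w1 w1t s + D w2 w2t s / a + 2 * g * (energy w1 s + energy w2 s / a) \<le> 0"
    using D1 D2 by (simp add: algebra_simps)
qed

lemma sqrt_le_of_weighted_decay:
  fixes a g s E1 E2 F1 F2 :: real
  assumes "0 < a" and "a \<le> 1" and "0 \<le> E2" and "0 \<le> F1" and "0 \<le> F2"
    and decay: "exp (2 * g * s) * (E1 + E2 / a) \<le> F1 + F2 / a"
  shows "sqrt (E1 + E2) \<le> a powr (-3/2) * exp (- g * s) * sqrt (F1 + F2)"
proof -
  have "E1 + E2 \<le> E1 + E2 / a"
    using \<open>0 < a\<close> \<open>a \<le> 1\<close> \<open>0 \<le> E2\<close> by (simp add: le_divide_eq mult_left_le)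
  also have "\<dots> \<le> (exp (- g * s))\<^sup>2 * (F1 + F2 / a)"
    using decay by (simp add: exp_minus field_simps flip: exp_double)
  also have "\<dots> \<le> (exp (- g * s))\<^sup>2 * ((F1 + F2) / a)"
    using \<open>0 < a\<close> \<open>a \<le> 1\<close> \<open>0 \<le> F1\<close>
    by (intro mult_left_mono) (auto simp: add_divide_distrib le_divide_eq mult_left_le)
  finally have "sqrt (E1 + E2) \<le> sqrt ((exp (- g * s))\<^sup>2 * ((F1 + F2) / a))"
    by (rule real_sqrt_le_mono)
  also have "\<dots> = exp (- g * s) * sqrt (F1 + F2) * a powr (-1/2)"
    using \<open>0 < a\<close> by (simp add: real_sqrt_mult real_sqrt_divide powr_minus_divide powr_half_sqrt)
  also have "\<dots> \<le> exp (- g * s) * sqrt (F1 + F2) * a powr (-3/2)"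
    using \<open>0 < a\<close> \<open>a \<le> 1\<close> \<open>0 \<le> F1\<close> \<open>0 \<le> F2\<close> by (intro mult_left_mono powr_mono') auto
  finally show ?thesis
    by (simp add: mult_ac)
qed

lemma L2norm2_eq_sqrt_energy:
  assumes "continuous_on {0..1} (\<lambda>x. w1 x t)" and "continuous_on {0..1} (\<lambda>x. w2 x t)"
  shows "L2norm2 w1 w2 t = sqrt (energy w1 t + energy w2 t)"
  unfolding L2norm2_def energy_def using assms
  by (simp add: integral_add integrable_continuous_interval continuous_on_power)

lemma coupled_heat_L2norm2_decay:
  fixes w1 w1x w1xx w1t w2 w2x w2xx w2t :: "real \<Rightarrow> real \<Rightarrow> real"
  assumes "0 < a" and "a \<le> 1" and "0 \<le> e1" and "e2 = e1 * a\<^sup>2"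
    and "g \<le> c1 + e1 / 4" and "g \<le> c2 + e2 / 4"
    and sol1: "classical_heat_sol e1 c1 t0 w1 w1x w1xx w1t"
    and sol2: "classical_heat_sol e2 c2 t0 w2 w2x w2xx w2t"
    and "\<forall>t\<ge>t0. w1 0 t = w2 0 t"
    and "\<forall>t\<ge>t0. w1x 0 t + a * w2x 0 t = 0"
    and "\<forall>t\<ge>t0. w1 1 t = 0 \<and> w2 1 t = 0"
    and "t0 \<le> t"
  shows "L2norm2 w1 w2 t \<le> a powr (-3/2) * exp (- g * (t - t0)) * L2norm2 w1 w2 t0"
proof -
  have L2norm2: "L2norm2 w1 w2 s = sqrt (energy w1 s + energy w2 s)" if "t0 \<le> s" for s
    using classical_heat_sol_continuous_on_slices(1)[OF sol1 that]
      classical_heat_sol_continuous_on_slices(1)[OF sol2 that]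
    by (rule L2norm2_eq_sqrt_energy)
  have "exp (2 * g * (t - t0)) * (energy w1 t + energy w2 t / a) \<le> energy w1 t0 + energy w2 t0 / a"
    by (rule coupled_heat_energy_decay) (use assms in auto)
  then show ?thesis
    unfolding L2norm2[OF \<open>t0 \<le> t\<close>] L2norm2[OF order_refl]
    by (intro sqrt_le_of_weighted_decay[OF \<open>0 < a\<close> \<open>a \<le> 1\<close>] energy_nonneg)
qed

theorem lemma1:
  fixes eps y0 c1 c2 t0 :: real
    and w1 w1x w1xx w1t w2 w2x w2xx w2t :: "real \<Rightarrow> real \<Rightarrow> real"
  assumes "eps > 0" and "-1 < y0" and "y0 \<le> 0" and "c1 > 0" and "c2 > 0"
    and "classical_heat_sol (eps / (1 + y0)\<^sup>2) c1 t0 w1 w1x w1xx w1t"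
    and "classical_heat_sol (eps / (1 - y0)\<^sup>2) c2 t0 w2 w2x w2xx w2t"
    and "\<forall>t\<ge>t0. w1 0 t = w2 0 t"
    and "\<forall>t\<ge>t0. w1x 0 t + ((1 + y0) / (1 - y0)) * w2x 0 t = 0"
    and "\<forall>t\<ge>t0. w1 1 t = 0 \<and> w2 1 t = 0"
  shows "\<forall>t\<ge>t0. L2norm2 w1 w2 t \<le>
           ((1 + y0) / (1 - y0)) powr (-3/2)
           * exp (- (min (((1 + y0) / (1 - y0))^3 * c1) c2 + (eps / (1 - y0)\<^sup>2) / 4) * (t - t0))
           * L2norm2 w1 w2 t0"
proof -
  define a where "a = (1 + y0) / (1 - y0)"
  define e1 where "e1 = eps / (1 + y0)\<^sup>2"
  define e2 where "e2 = eps / (1 - y0)\<^sup>2"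
  have "0 < a" "a \<le> 1" "0 \<le> e1"
    using assms(1-3) by (auto simp: a_def e1_def)
  have "e2 = e1 * a\<^sup>2"
    using assms(2,3) by (simp add: a_def e1_def e2_def power_divide)
  then have "e2 \<le> e1"
    using \<open>0 < a\<close> \<open>a \<le> 1\<close> \<open>0 \<le> e1\<close> by (simp add: mult_left_le power_le_one)
  moreover have "a ^ 3 * c1 \<le> c1"
    using \<open>0 < a\<close> \<open>a \<le> 1\<close> \<open>c1 > 0\<close> by (simp add: mult_left_le_one_le power_le_one)
  ultimately have "min (a ^ 3 * c1) c2 + e2 / 4 \<le> c1 + e1 / 4" "min (a ^ 3 * c1) c2 + e2 / 4 \<le> c2 + e2 / 4"
    by auto
  from coupled_heat_L2norm2_decay[OF \<open>0 < a\<close> \<open>a \<le> 1\<close> \<open>0 \<le> e1\<close> \<open>e2 = e1 * a\<^sup>2\<close> this]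
  show ?thesis
    using assms(6-10) by (simp add: a_def e1_def e2_def)
qed

end
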